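(* Consider the perturbed linear contextual bandit model described in the context. Fix a batch-style algorithm and any batch $B$ in its execution. Assume the batch covariance matrix satisfies $\lambda_{\min}(Z_B)\ge R^2$. Then the batch history $h_B$ can simulate $\mathrm{Rew}(\cdot)$ up to radius $R$.
   Context: Model: $T$ rounds, at most $K$ actions, dimension $d$, latent $\theta\in\mathbb R^d$; contexts $x_{a,t}=\mu_{a,t}+\varepsilon_{a,t}$ with coordinates of $\varepsilon_{a,t}$ i.i.d. $\mathcal N(0,\rho^2)$; the reward of the chosen action is $r_t=\theta^\top x_t+\eta_t$ with $x_t=x_{a_t,t}$ and independent $\eta_t\sim\mathcal N(0,1)$. An algorithm is batch-style if time is divided into batches of $Y$ consecutive rounds and the action in each round depends only on the history up to the previous batch. For a batch $B$: batch history $h_B=((x_t,r_t):t\in B)$, batch context matrix $X_B$ is the $Y\times d$ matrix with rows $x_t$, $t\in B$, and $Z_B=X_B^\top X_B=\sum_{t\in B}x_tx_t^\top$. Parameters: $\hat R=\rho\sqrt{2\log(2TKd\cdot T^2)}$ and $R=1+\hat R\sqrt d$. $\mathrm{Rew}(\cdot)$ is the randomized function that on input $x$ outputs an independent sample from $\mathcal N(\theta^\top x,1)$. Batch history $h_B$ can simulate $\mathrm{Rew}(\cdot)$ up to radius $R>0$ if there exists a function $g$ (of a context vector and a batch history, to $\mathbb R$; not necessarily efficiently computable) such that $g(x,h_B)$ is distributed identically to $\mathrm{Rew}(x)$ conditional on the batch context matrix $X_B$, for all $\theta$ and all $x\in\mathbb R^d$ with $\|x\|_2\le R$. *)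

theory Defs
  imports "HOL-Analysis.Analysis" "HOL-Probability.Probability"
begin

text \<open>Smallest eigenvalue of a real square matrix (used for symmetric matrices,
  whose eigenvalues are all real).\<close>
definition lambda_min :: "real^'d::finite^'d::finite \<Rightarrow> real" where
  "lambda_min A = Min {c. \<exists>v. v \<noteq> 0 \<and> A *v v = c *\<^sub>R v}"

definition R_param :: "nat \<Rightarrow> nat \<Rightarrow> nat \<Rightarrow> real \<Rightarrow> real" where
  "R_param T K d \<rho> =
     1 + \<rho> * sqrt (2 * ln (2 * real T * real K * real d * (real T)^2)) * sqrt (real d)"

definition Rew :: "real^'d \<Rightarrow> real^'d \<Rightarrow> real measure" where
  "Rew \<theta> x = density lborel (normal_density (\<theta> \<bullet> x) 1)"

text \<open>Measurable space of batch histories ((x_t, r_t) : t in B); the batch rounds are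
  indexed by the finite type 'y (so Y = CARD('y)).\<close>
definition hist_space :: "('y::finite \<Rightarrow> (real^'d::finite) \<times> real) measure" where
  "hist_space = Pi\<^sub>M UNIV (\<lambda>_. borel)"

text \<open>Distribution of the batch history h_B conditional on the batch context matrix
  X_B = X (rows X $ t, t in B): the contexts are X and, since in a batch-style algorithm
  the contexts of the batch are determined before any reward of the batch is revealed,
  the rewards are independent, r_t ~ N(theta^T x_t, 1).\<close>
definition batch_hist_dist :: "real^'d \<Rightarrow> real^'d^'y \<Rightarrow> ('y::finite \<Rightarrow> (real^'d::finite) \<times> real) measure" where
  "batch_hist_dist \<theta> X =
     distr (Pi\<^sub>M UNIV (\<lambda>t. density lborel (normal_density (\<theta> \<bullet> (X $ t)) 1)))
           hist_space (\<lambda>r t. (X $ t, r t))"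

text \<open>h_B can simulate Rew up to radius R (conditional on X_B = X): there is a
  (possibly randomized, not necessarily efficient) function g, i.e. a Markov kernel
  from histories to reals for each context x, such that g(x, h_B) has the law of Rew(x)
  for every theta and every x with norm at most R.\<close>
definition can_simulate :: "real^'d^'y \<Rightarrow> real \<Rightarrow> bool" where
  "can_simulate X R \<longleftrightarrow>
     (\<exists>g :: real^'d \<Rightarrow> ('y::finite \<Rightarrow> (real^'d::finite) \<times> real) \<Rightarrow> real measure.
        (\<forall>x. g x \<in> measurable hist_space (prob_algebra borel)) \<and>
        (\<forall>\<theta> x. norm x \<le> R \<longrightarrow> bind (batch_hist_dist \<theta> X) (g x) = Rew \<theta> x))"

end

theory Submission
  imports Defs
begin

text \<open>Write \<open>Z = X\<^sup>T X\<close>. Since \<open>\<lambda>\<^sub>m\<^sub>i\<^sub>n Z \<ge> R\<^sup>2 > 0\<close>, \<open>Z\<close> is invertible, and for \<open>\<parallel>x\<parallel> \<le> R\<close> the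
  vector \<open>w = X Z\<^sup>-\<^sup>1 x\<close> satisfies \<open>X\<^sup>T w = x\<close> and \<open>\<parallel>w\<parallel>\<^sup>2 = x\<^sup>T Z\<^sup>-\<^sup>1 x \<le> \<parallel>x\<parallel>\<^sup>2 / R\<^sup>2 \<le> 1\<close>.
  From the batch history output \<open>\<Sum>\<^sub>t w\<^sub>t r\<^sub>t + sqrt (1 - \<parallel>w\<parallel>\<^sup>2) z\<close> with fresh noise \<open>z ~ N(0,1)\<close>.
  Given \<open>X\<close>, the rewards are independent with \<open>r\<^sub>t ~ N(\<theta>\<^sup>T x\<^sub>t, 1)\<close>, so this output is Gaussian with
  mean \<open>\<theta>\<^sup>T X\<^sup>T w = \<theta>\<^sup>T x\<close> and variance \<open>\<parallel>w\<parallel>\<^sup>2 + (1 - \<parallel>w\<parallel>\<^sup>2) = 1\<close>, i.e. it has the law of \<open>Rew(x)\<close>.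
  Gaussianity of this mixture is verified on characteristic functions.\<close>

lemma inner_matrix_vector_symmetric:
  fixes A :: "real^'n^'n"
  assumes "transpose A = A"
  shows "u \<bullet> (A *v v) = (A *v u) \<bullet> v"
  by (metis assms dot_lmul_matrix transpose_matrix_vector)

lemma finite_eigenvalues_symmetric:
  fixes A :: "real^'n^'n"
  assumes sym: "transpose A = A"
  shows "finite {c. \<exists>v. v \<noteq> 0 \<and> A *v v = c *\<^sub>R v}"
proof -
  define E where "E = {c. \<exists>v. v \<noteq> 0 \<and> A *v v = c *\<^sub>R v}"
  define ev where "ev c = (SOME v. v \<noteq> 0 \<and> A *v v = c *\<^sub>R v)" for c
  have ev: "ev c \<noteq> 0 \<and> A *v ev c = c *\<^sub>R ev c" if "c \<in> E" for c
    using that unfolding E_def ev_def mem_Collect_eq by (rule someI_ex)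
  have orth: "ev c \<bullet> ev d = 0" if "c \<in> E" "d \<in> E" "c \<noteq> d" for c d
  proof -
    have "d * (ev c \<bullet> ev d) = ev c \<bullet> (A *v ev d)" using ev[OF that(2)] by simp
    also have "\<dots> = (A *v ev c) \<bullet> ev d" by (rule inner_matrix_vector_symmetric[OF sym])
    also have "\<dots> = c * (ev c \<bullet> ev d)" using ev[OF that(1)] by simp
    finally show ?thesis using that(3) by simp
  qed
  have "inj_on ev E"
    by (rule inj_onI) (metis ev orth inner_eq_zero_iff)
  moreover have "independent (ev ` E)"
    by (rule pairwise_orthogonal_independent) (use ev orth in \<open>auto simp: pairwise_def orthogonal_def\<close>)
  ultimately show ?thesis
    unfolding E_def[symmetric] by (metis finite_imageD independent_imp_finite)
qed

lemma quadratic_form_add_scaleR: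
  fixes A :: "real^'n^'n"
  assumes "transpose A = A"
  shows "(v + s *\<^sub>R u) \<bullet> (A *v (v + s *\<^sub>R u))
    = v \<bullet> (A *v v) + 2 * s * (u \<bullet> (A *v v)) + s\<^sup>2 * (u \<bullet> (A *v u))"
  using inner_matrix_vector_symmetric[OF assms, of v u]
  by (simp add: inner_commute[of "A *v v" u] power2_eq_square algebra_simps)

lemma norm_add_scaleR_squared:
  fixes u v :: "'a::real_inner"
  shows "(norm (v + s *\<^sub>R u))\<^sup>2 = (norm v)\<^sup>2 + 2 * s * (u \<bullet> v) + s\<^sup>2 * (norm u)\<^sup>2"
  unfolding power2_norm_eq_inner
  by (simp add: inner_commute[of v u] power2_eq_square algebra_simps)

lemma linear_coeff_zero_if_quadratic_nonneg:
  fixes a b :: real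
  assumes "\<And>s. 0 \<le> 2 * s * a + s\<^sup>2 * b"
  shows "a = 0"
proof -
  define c where "c = \<bar>b\<bar> + 1"
  have c: "c > 0" "b - 2 * c < 0" unfolding c_def by auto
  have "0 \<le> c\<^sup>2 * (2 * (- a / c) * a + (- a / c)\<^sup>2 * b)"
    using assms[of "- a / c"] by simp
  also have "\<dots> = a\<^sup>2 * (b - 2 * c)"
    using c by (simp add: field_simps power2_eq_square)
  finally have "a\<^sup>2 \<le> 0"
    using c by (simp add: zero_le_mult_iff)
  then show ?thesis by simp
qed

lemma eigenvector_if_rayleigh_minimal:
  fixes A :: "real^'n^'n"
  assumes sym: "transpose A = A"
    and ge: "\<And>v. m * (norm v)\<^sup>2 \<le> v \<bullet> (A *v v)"
    and eq: "v0 \<bullet> (A *v v0) = m * (norm v0)\<^sup>2"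
  shows "A *v v0 = m *\<^sub>R v0"
proof -
  have "u \<bullet> (A *v v0 - m *\<^sub>R v0) = 0" for u
  proof -
    have "0 \<le> 2 * s * (u \<bullet> (A *v v0 - m *\<^sub>R v0)) + s\<^sup>2 * (u \<bullet> (A *v u) - m * (norm u)\<^sup>2)" for s
      using ge[of "v0 + s *\<^sub>R u"] eq
      unfolding quadratic_form_add_scaleR[OF sym] norm_add_scaleR_squared
      by (simp add: inner_commute[of u v0] algebra_simps)
    then show ?thesis by (rule linear_coeff_zero_if_quadratic_nonneg)
  qed
  from this[of "A *v v0 - m *\<^sub>R v0"] show ?thesis by simp
qed

lemma lambda_min_le_rayleigh:
  fixes A :: "real^'n^'n"
  assumes sym: "transpose A = A"
  shows "lambda_min A * (norm v)\<^sup>2 \<le> v \<bullet> (A *v v)"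
proof -
  txt \<open>The minimiser of the Rayleigh quotient on the unit sphere is an eigenvector; symmetry also
    makes the eigenvalue set finite, so that the \<open>Min\<close> in \<open>lambda_min\<close> is a genuine minimum.\<close>
  define q where "q v = v \<bullet> (A *v v)" for v
  have "continuous_on (sphere 0 1) q"
    unfolding q_def by (intro continuous_intros linear_continuous_on
        linear_conv_bounded_linear[THEN iffD1] matrix_vector_mul_linear)
  moreover have "sphere (0::real^'n) 1 \<noteq> {}"
    by (metis SOME_Basis empty_iff mem_sphere_0 norm_Basis)
  ultimately obtain v0 where v0: "norm v0 = 1" and min: "\<And>u. norm u = 1 \<Longrightarrow> q v0 \<le> q u"
    using continuous_attains_inf[OF compact_sphere] by (metis mem_sphere_0)
  have ge: "q v0 * (norm v)\<^sup>2 \<le> q v" for v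
  proof (cases "v = 0")
    case False
    have "q v0 \<le> q ((1 / norm v) *\<^sub>R v)" using False by (intro min) simp
    also have "\<dots> = q v / (norm v)\<^sup>2"
      unfolding q_def by (simp add: matrix_vector_mult_scaleR power2_eq_square)
    finally show ?thesis using False by (simp add: field_simps)
  qed (simp add: q_def)
  have "A *v v0 = q v0 *\<^sub>R v0"
    using ge v0 unfolding q_def by (intro eigenvector_if_rayleigh_minimal[OF sym]) auto
  then have "q v0 \<in> {c. \<exists>v. v \<noteq> 0 \<and> A *v v = c *\<^sub>R v}"
    using v0 by (auto intro!: exI[of _ v0])
  then have "lambda_min A \<le> q v0"
    unfolding lambda_min_def using finite_eigenvalues_symmetric[OF sym] by simp
  then show ?thesis
    using ge[of v] unfolding q_def by (meson mult_right_mono order_trans zero_le_power2)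
qed

lemma transpose_gram: "transpose (transpose X ** X) = transpose X ** (X::real^'n^'m)"
  by (simp add: matrix_transpose_mul)

lemma inner_gram_self: "v \<bullet> ((transpose X ** X) *v v) = (norm (X *v (v::real^'n)))\<^sup>2"
  for X :: "real^'n^'m"
proof -
  have "v \<bullet> ((transpose X ** X) *v v) = ((X *v v) v* X) \<bullet> v"
    by (simp add: matrix_vector_mul_assoc[symmetric] inner_commute)
  also have "\<dots> = (norm (X *v v))\<^sup>2"
    by (simp add: dot_lmul_matrix power2_norm_eq_inner)
  finally show ?thesis .
qed

lemma inner_transpose_matrix_vector:
  fixes X :: "real^'n^'m"
  shows "\<theta> \<bullet> (transpose X *v w) = (\<Sum>s\<in>UNIV. w $ s * (\<theta> \<bullet> X $ s))"
proof -
  have "transpose X *v w = (\<Sum>s\<in>UNIV. w $ s *\<^sub>R X $ s)"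
    unfolding matrix_mult_sum column_transpose scalar_mult_eq_scaleR
    by (simp add: row_def)
  then show ?thesis
    by (simp add: inner_sum_right)
qed

lemma gram_preimage_in_unit_ball:
  fixes X :: "real^'n^'m"
  assumes lam: "lambda_min (transpose X ** X) \<ge> R\<^sup>2" and x: "norm x \<le> R"
  shows "\<exists>w. transpose X *v w = x \<and> norm w \<le> 1"
proof (cases "x = 0")
  case False
  define Z where "Z = transpose X ** X"
  have R: "R > 0" using False x by (meson order_less_le_trans zero_less_norm_iff)
  have low: "R\<^sup>2 * (norm v)\<^sup>2 \<le> (norm (X *v v))\<^sup>2" for v
    using lambda_min_le_rayleigh[OF transpose_gram, of X v] lam
    unfolding inner_gram_self by (meson mult_right_mono order_trans zero_le_power2)
  have "inj ((*v) Z)"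
    unfolding linear_injective_0[OF matrix_vector_mul_linear]
  proof (intro allI impI)
    fix v assume "Z *v v = 0"
    then have "R\<^sup>2 * (norm v)\<^sup>2 \<le> 0"
      using low[of v] inner_gram_self[of v X] unfolding Z_def by simp
    then show "v = 0" using R by (simp add: mult_le_0_iff)
  qed
  then obtain v where v: "Z *v v = x"
    by (metis linear_injective_imp_surjective matrix_vector_mul_linear surjD)
  define w where "w = X *v v"
  have "transpose X *v w = x"
    using v unfolding w_def Z_def by (simp add: matrix_vector_mul_assoc)
  moreover have "norm w \<le> 1"
  proof -
    have w2: "(norm w)\<^sup>2 \<le> R * norm v"
    proof -
      have "(norm w)\<^sup>2 = v \<bullet> x" using inner_gram_self[of v X] v unfolding w_def Z_def by simp
      also have "\<dots> \<le> norm v * norm x" by (simp add: norm_cauchy_schwarz)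
      also have "\<dots> \<le> R * norm v" using mult_left_mono[OF x, of "norm v"] by (simp add: mult.commute)
      finally show ?thesis .
    qed
    have "(R * norm v)\<^sup>2 \<le> R * norm v"
      using low[of v] w2 unfolding w_def by (simp add: power_mult_distrib)
    then have "R * norm v \<le> 1"
      using mult_strict_left_mono[of 1 "R * norm v" "R * norm v"] by (smt (verit) power2_eq_square)
    then have "(norm w)\<^sup>2 \<le> 1" using w2 by simp
    then show ?thesis by (simp add: power_le_one_iff)
  qed
  ultimately show ?thesis by blast
qed (auto intro: exI[of _ 0])

lemma density_normal_eq_distr_std_normal:
  assumes "\<sigma> > 0"
  shows "density lborel (normal_density \<mu> \<sigma>) = distr std_normal_distribution borel (\<lambda>z. \<mu> + \<sigma> * z)"
proof -
  interpret std: prob_space std_normal_distribution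
    by (rule prob_space_normal_density) simp
  have "distributed std_normal_distribution lborel (\<lambda>z. z) std_normal_density"
    unfolding distributed_def by (auto intro: distr_id2 measurable_ident_sets)
  then have "distributed std_normal_distribution lborel (\<lambda>z. \<mu> + \<sigma> * z) (normal_density \<mu> \<sigma>)"
    using std.normal_density_affine[of "\<lambda>z. z" 0 1 \<sigma> \<mu>] assms by simp
  then show ?thesis
    unfolding distributed_def by (metis distr_cong sets_lborel)
qed

lemma char_affine_std_normal:
  "char (distr std_normal_distribution borel (\<lambda>z. a + b * z)) t
    = exp (\<i> * of_real (t * a) - of_real ((b * t)\<^sup>2 / 2))"
proof -
  have "char (distr std_normal_distribution borel (\<lambda>z. a + b * z)) t
      = (CLINT z|std_normal_distribution. iexp (t * a) * iexp ((b * t) * z))"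
    by (simp add: char_def integral_distr exp_add[symmetric] algebra_simps)
  also have "\<dots> = iexp (t * a) * char std_normal_distribution (b * t)"
    by (simp add: char_def)
  finally show ?thesis
    by (simp add: char_std_normal_distribution exp_of_real[symmetric] exp_diff exp_minus inverse_eq_divide)
qed

lemma char_normal_density:
  assumes "\<sigma> > 0"
  shows "char (density lborel (normal_density \<mu> \<sigma>)) t
    = exp (\<i> * of_real (t * \<mu>) - of_real ((\<sigma> * t)\<^sup>2 / 2))"
  unfolding density_normal_eq_distr_std_normal[OF assms] by (rule char_affine_std_normal)

lemma (in real_distribution) integrable_iexp_mult: "integrable M (\<lambda>y. iexp (t * y))"
  by (intro integrable_iexp) auto

lemma (in real_distribution) char_eq_Complex_cos_sin:
  "char M t = Complex (\<integral>y. cos (t * y) \<partial>M) (\<integral>y. sin (t * y) \<partial>M)"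
  using integrable_iexp_mult[of t] unfolding char_def
  by (intro complex_eqI) (simp_all add: integral_Re[symmetric] integral_Im[symmetric] Re_exp Im_exp)

lemma char_bind:
  fixes K :: "'a \<Rightarrow> real measure"
  assumes M: "prob_space M" and K: "K \<in> M \<rightarrow>\<^sub>M prob_algebra borel"
    and \<phi>: "\<And>x. x \<in> space M \<Longrightarrow> char (K x) t = \<phi> x" and [measurable]: "\<phi> \<in> borel_measurable M"
  shows "char (bind M K) t = integral\<^sup>L M \<phi>"
proof -
  interpret prob_space M by (rule M)
  have Kx: "real_distribution (K x)" if "x \<in> space M" for x
    using measurable_space[OF K that]
    by (simp add: space_prob_algebra real_distribution_def real_distribution_axioms_def)
  have bind: "real_distribution (bind M K)"
    using prob_space_bind'[OF _ K] sets_bind'[OF _ K] M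
    by (simp add: space_prob_algebra real_distribution_def real_distribution_axioms_def)
  have bind_integral: "(\<integral>y. f y \<partial>bind M K) = (\<integral>x. (\<integral>y. f y \<partial>K x) \<partial>M)"
    if [measurable]: "f \<in> borel_measurable borel" and "\<And>y. \<bar>f y\<bar> \<le> 1" for f :: "real \<Rightarrow> real"
    using that(2) measurable_prob_algebraD[OF K] Kx
    by (intro integral_bind[where B=1 and B'=1])
       (auto intro!: finite_measure_axioms simp: real_distribution_def prob_space.emeasure_space_1)
  have \<phi>_integrable: "integrable M \<phi>"
    using \<phi> real_distribution.cmod_char_le_1[OF Kx]
    by (intro integrable_const_bound[where B=1]) (auto simp: \<phi>[symmetric])
  have \<phi>_cos_sin: "\<phi> x = Complex (\<integral>y. cos (t * y) \<partial>K x) (\<integral>y. sin (t * y) \<partial>K x)" if "x \<in> space M" for x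
    using \<phi>[OF that] real_distribution.char_eq_Complex_cos_sin[OF Kx[OF that]] by simp
  show ?thesis
  proof (rule complex_eqI)
    have "Re (char (bind M K) t) = (\<integral>x. (\<integral>y. cos (t * y) \<partial>K x) \<partial>M)"
      by (simp add: real_distribution.char_eq_Complex_cos_sin[OF bind] bind_integral)
    also have "\<dots> = Re (integral\<^sup>L M \<phi>)"
      unfolding integral_Re[OF \<phi>_integrable, symmetric]
      by (rule Bochner_Integration.integral_cong) (simp_all add: \<phi>_cos_sin)
    finally show "Re (char (bind M K) t) = Re (integral\<^sup>L M \<phi>)" .
    have "Im (char (bind M K) t) = (\<integral>x. (\<integral>y. sin (t * y) \<partial>K x) \<partial>M)"
      by (simp add: real_distribution.char_eq_Complex_cos_sin[OF bind] bind_integral)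
    also have "\<dots> = Im (integral\<^sup>L M \<phi>)"
      unfolding integral_Im[OF \<phi>_integrable, symmetric]
      by (rule Bochner_Integration.integral_cong) (simp_all add: \<phi>_cos_sin)
    finally show "Im (char (bind M K) t) = Im (integral\<^sup>L M \<phi>)" .
  qed
qed

lemma integral_iexp_linear_PiM:
  fixes N :: "'i \<Rightarrow> real measure"
  assumes "finite I" and N: "\<And>i. real_distribution (N i)"
  shows "(\<integral>r. iexp (t * (\<Sum>i\<in>I. w i * r i)) \<partial>Pi\<^sub>M I N) = (\<Prod>i\<in>I. char (N i) (t * w i))"
proof -
  interpret product_sigma_finite N
    using N by (simp add: product_sigma_finite_def real_distribution_def prob_space_imp_sigma_finite)
  have "iexp (t * (\<Sum>i\<in>I. w i * r i)) = (\<Prod>i\<in>I. iexp (t * w i * r i))" for r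
    by (simp add: sum_distrib_left mult.assoc exp_sum[OF \<open>finite I\<close>, symmetric])
  then have "(\<integral>r. iexp (t * (\<Sum>i\<in>I. w i * r i)) \<partial>Pi\<^sub>M I N) = (\<integral>r. (\<Prod>i\<in>I. iexp (t * w i * r i)) \<partial>Pi\<^sub>M I N)"
    by simp
  also have "\<dots> = (\<Prod>i\<in>I. \<integral>y. iexp (t * w i * y) \<partial>N i)"
    using N by (intro product_integral_prod[OF \<open>finite I\<close>] real_distribution.integrable_iexp_mult)
  finally show ?thesis
    unfolding char_def .
qed

lemma measurable_gaussian_noise_kernel:
  assumes [measurable]: "f \<in> borel_measurable M"
  shows "(\<lambda>x. distr std_normal_distribution borel (\<lambda>z. f x + \<sigma> * z)) \<in> M \<rightarrow>\<^sub>M prob_algebra borel"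
proof (rule measurable_distr_prob_space2)
  show "(\<lambda>x. std_normal_distribution) \<in> M \<rightarrow>\<^sub>M prob_algebra borel"
    by (intro measurable_const) (simp add: space_prob_algebra prob_space_normal_density)
  show "(\<lambda>(x, z). f x + \<sigma> * z) \<in> M \<Otimes>\<^sub>M borel \<rightarrow>\<^sub>M borel"
    by measurable
qed

lemma bind_PiM_normal_gaussian_noise:
  fixes \<mu> w \<tau> :: "'i::finite \<Rightarrow> real"
  assumes \<tau>: "\<And>i. \<tau> i > 0" and \<kappa>: "\<kappa> > 0"
    and var: "(\<Sum>i\<in>UNIV. (\<tau> i * w i)\<^sup>2) + \<sigma>\<^sup>2 = \<kappa>\<^sup>2"
  shows "bind (Pi\<^sub>M UNIV (\<lambda>i. density lborel (normal_density (\<mu> i) (\<tau> i))))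
           (\<lambda>r. distr std_normal_distribution borel (\<lambda>z. (\<Sum>i\<in>UNIV. w i * r i) + \<sigma> * z))
         = density lborel (normal_density (\<Sum>i\<in>UNIV. w i * \<mu> i) \<kappa>)"
    (is "bind ?P ?K = ?N")
proof -
  have normal: "real_distribution (density lborel (normal_density m s))" if "s > 0" for m s
    using prob_space_normal_density[OF that]
    by (simp add: real_distribution_def real_distribution_axioms_def)
  have "(\<lambda>r. \<Sum>i\<in>UNIV. w i * r i) \<in> borel_measurable ?P"
    unfolding measurable_cong_sets[OF sets_PiM_cong[OF refl sets_density] refl] by measurable
  then have K: "?K \<in> ?P \<rightarrow>\<^sub>M prob_algebra borel"
    by (rule measurable_gaussian_noise_kernel)
  have P: "prob_space ?P"
    using \<tau> normal by (intro prob_space_PiM) (simp add: real_distribution_def)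
  have "char (bind ?P ?K) t = char ?N t" for t
  proof -
    have "char (bind ?P ?K) t
        = (\<integral>r. iexp (t * (\<Sum>i\<in>UNIV. w i * r i)) * exp (- of_real ((\<sigma> * t)\<^sup>2 / 2)) \<partial>?P)"
    proof (rule char_bind[OF P K])
      show "char (?K r) t = iexp (t * (\<Sum>i\<in>UNIV. w i * r i)) * exp (- of_real ((\<sigma> * t)\<^sup>2 / 2))" for r
        by (simp only: char_affine_std_normal diff_conv_add_uminus exp_add)
    qed simp
    also have "\<dots> = (\<Prod>i\<in>UNIV. exp (\<i> * of_real (t * w i * \<mu> i) - of_real ((\<tau> i * (t * w i))\<^sup>2 / 2)))
        * exp (- of_real ((\<sigma> * t)\<^sup>2 / 2))"
      using normal[OF \<tau>]
      by (simp only: integral_mult_left_zero integral_iexp_linear_PiM[OF finite_class.finite_UNIV] char_normal_density[OF \<tau>])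
    also have "\<dots> = exp (\<i> * of_real (\<Sum>i\<in>UNIV. t * w i * \<mu> i)
        - of_real ((\<Sum>i\<in>UNIV. (\<tau> i * (t * w i))\<^sup>2 / 2) + (\<sigma> * t)\<^sup>2 / 2))"
    proof -
      have "(\<Prod>i\<in>UNIV. exp (\<i> * of_real (a i) - of_real (b i)))
          = exp (\<i> * of_real (sum a UNIV) - of_real (sum b UNIV))" for a b :: "'i \<Rightarrow> real"
        by (simp add: exp_sum[symmetric] sum_subtractf sum_distrib_left)
      then show ?thesis
        by (simp only: mult_exp_exp of_real_add diff_diff_eq[symmetric] diff_conv_add_uminus minus_add_distrib add.assoc)
    qed
    also have "\<dots> = exp (\<i> * of_real (t * (\<Sum>i\<in>UNIV. w i * \<mu> i)) - of_real ((\<kappa> * t)\<^sup>2 / 2))"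
    proof -
      have "(\<Sum>i\<in>UNIV. (\<tau> i * (t * w i))\<^sup>2 / 2) = t\<^sup>2 / 2 * (\<Sum>i\<in>UNIV. (\<tau> i * w i)\<^sup>2)"
        unfolding sum_distrib_left by (intro sum.cong) (simp_all add: power_mult_distrib)
      then have "(\<Sum>i\<in>UNIV. (\<tau> i * (t * w i))\<^sup>2 / 2) + (\<sigma> * t)\<^sup>2 / 2 = (\<kappa> * t)\<^sup>2 / 2"
        by (simp add: var[symmetric] algebra_simps)
      moreover have "(\<Sum>i\<in>UNIV. t * w i * \<mu> i) = t * (\<Sum>i\<in>UNIV. w i * \<mu> i)"
        by (simp add: sum_distrib_left mult.assoc)
      ultimately show ?thesis by (simp only:)
    qed
    also have "\<dots> = char ?N t"
      using \<kappa> by (simp add: char_normal_density)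
    finally show ?thesis .
  qed
  then show ?thesis
    using \<kappa> P K
    by (intro Levy_uniqueness normal ext)
       (simp add: real_distribution_def real_distribution_axioms_def prob_space_bind' sets_bind' space_prob_algebra)
qed

lemma measurable_batch_history:
  fixes X :: "real^'d^'y"
  assumes "sets M = sets (Pi\<^sub>M UNIV (\<lambda>_. borel :: real measure))"
  shows "(\<lambda>r t. (X $ t, r t)) \<in> M \<rightarrow>\<^sub>M hist_space"
  unfolding measurable_cong_sets[OF assms refl] hist_space_def
proof (rule measurable_PiM_single')
  fix t :: 'y
  have "(\<lambda>r :: 'y \<Rightarrow> real. (X $ t, r t)) \<in> Pi\<^sub>M UNIV (\<lambda>_. borel) \<rightarrow>\<^sub>M borel \<Otimes>\<^sub>M borel"
    by (rule measurable_Pair) (auto intro: measurable_component_singleton)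
  then show "(\<lambda>r :: 'y \<Rightarrow> real. (X $ t, r t)) \<in> Pi\<^sub>M UNIV (\<lambda>_. borel) \<rightarrow>\<^sub>M borel"
    by (simp only: borel_prod)
qed simp

lemma borel_measurable_reward_combination:
  "(\<lambda>h. \<Sum>s\<in>UNIV. c s * snd (h s)) \<in> borel_measurable (hist_space :: ('y::finite \<Rightarrow> (real^'d::finite) \<times> real) measure)"
proof -
  have [measurable]: "(\<lambda>h. snd (h s)) \<in> borel_measurable (hist_space :: ('y \<Rightarrow> (real^'d) \<times> real) measure)" for s
  proof -
    have "snd \<in> borel_measurable (borel :: ((real^'d) \<times> real) measure)"
      by (intro borel_measurable_continuous_onI continuous_on_snd continuous_on_id)
    then show ?thesis
      unfolding hist_space_def by (rule measurable_compose[OF measurable_component_singleton, rotated]) simp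
  qed
  show ?thesis by measurable
qed

lemma lambda_min_ge_imp_can_simulate:
  fixes X :: "real^'d^'y"
  assumes lam: "lambda_min (transpose X ** X) \<ge> R\<^sup>2"
  shows "can_simulate X R"
proof -
  define w where "w x = (SOME w. transpose X *v w = x \<and> norm w \<le> 1)" for x
  define \<sigma> where "\<sigma> x = sqrt (1 - (norm (w x))\<^sup>2)" for x
  define g where "g x h = distr std_normal_distribution borel
      (\<lambda>z. (\<Sum>s\<in>UNIV. w x $ s * snd (h s)) + \<sigma> x * z)" for x and h :: "'y \<Rightarrow> (real^'d) \<times> real"
  have g: "g x \<in> hist_space \<rightarrow>\<^sub>M prob_algebra borel" for x
    unfolding g_def by (intro measurable_gaussian_noise_kernel borel_measurable_reward_combination)
  have sim: "bind (batch_hist_dist \<theta> X) (g x) = Rew \<theta> x" if "norm x \<le> R" for \<theta> x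
  proof -
    have w: "transpose X *v w x = x" "norm (w x) \<le> 1"
      using someI_ex[OF gram_preimage_in_unit_ball[OF lam that]] unfolding w_def by auto
    let ?P = "Pi\<^sub>M UNIV (\<lambda>s. density lborel (normal_density (\<theta> \<bullet> X $ s) 1))"
    have "(\<lambda>r t. (X $ t, r t)) \<in> ?P \<rightarrow>\<^sub>M hist_space"
      by (intro measurable_batch_history sets_PiM_cong) simp_all
    moreover have "space ?P \<noteq> {}"
      by (intro prob_space.not_empty prob_space_PiM prob_space_normal_density) simp
    ultimately have "bind (batch_hist_dist \<theta> X) (g x) = bind ?P (\<lambda>r. g x (\<lambda>t. (X $ t, r t)))"
      unfolding batch_hist_dist_def by (rule bind_distr[OF _ measurable_prob_algebraD[OF g]])
    also have "\<dots> = bind ?P (\<lambda>r. distr std_normal_distribution borel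
        (\<lambda>z. (\<Sum>s\<in>UNIV. w x $ s * r s) + \<sigma> x * z))"
      by (simp add: g_def)
    also have "\<dots> = density lborel (normal_density (\<Sum>s\<in>UNIV. w x $ s * (\<theta> \<bullet> X $ s)) 1)"
    proof (rule bind_PiM_normal_gaussian_noise)
      have "(\<sigma> x)\<^sup>2 = 1 - (norm (w x))\<^sup>2"
        using w(2) by (simp add: \<sigma>_def power_le_one)
      moreover have "(norm (w x))\<^sup>2 = (\<Sum>s\<in>UNIV. (w x $ s)\<^sup>2)"
        unfolding power2_norm_eq_inner inner_vec_def by (simp add: power2_eq_square)
      ultimately show "(\<Sum>s\<in>UNIV. (1 * w x $ s)\<^sup>2) + (\<sigma> x)\<^sup>2 = 1\<^sup>2"
        by simp
    qed simp_all
    also have "\<dots> = Rew \<theta> x"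
      by (simp only: Rew_def inner_transpose_matrix_vector[symmetric] w(1))
    finally show ?thesis .
  qed
  show ?thesis
    unfolding can_simulate_def using g sim by (intro exI[of _ g]) simp
qed

theorem lemma4p6:
  fixes T K :: nat and \<rho> :: real and X :: "real^'d^'y"
  assumes "T \<ge> 1" and "K \<ge> 1" and "\<rho> > 0"
    and "lambda_min (transpose X ** X) \<ge> (R_param T K CARD('d) \<rho>)\<^sup>2"
  shows "can_simulate X (R_param T K CARD('d) \<rho>)"
  using assms(4) by (rule lambda_min_ge_imp_can_simulate)

end
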